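(* Let $n\ge2$ and let $Q$ be the $n\times n$ anti-comonotone checkerboard copula ($Q_{ij}=\frac1n$ if $i+j=n+1$, $Q_{ij}=0$ otherwise). For every $n\times n$ checkerboard copula $P\neq Q$, the function $\alpha\mapsto\tau(\alpha P+(1-\alpha)Q)$ is strictly increasing on $[0,1]$.
   Context: An $n\times n$ checkerboard copula is a real $n\times n$ matrix with nonnegative entries whose row and column sums all equal $\frac1n$. $\Xi=(\xi_{ij})$ with $\xi_{ij}=1$ if $i=j$, $2$ if $i>j$, $0$ if $i<j$. For an $n\times n$ matrix $M$, $\tau(M)=1-\mathrm{tr}(\Xi M\Xi M^\top)$ (Kendall's $\tau$ of a checkerboard copula). *)

theory Defs
  imports "HOL-Analysis.Analysis"
begin

text \<open>n x n real matrices are represented as functions nat => nat => real,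
  with row and column indices ranging over {1..n}; entries outside are irrelevant.\<close>

definition checkerboard_copula :: "nat \<Rightarrow> (nat \<Rightarrow> nat \<Rightarrow> real) \<Rightarrow> bool" where
  "checkerboard_copula n P \<longleftrightarrow>
     (\<forall>i\<in>{1..n}. \<forall>j\<in>{1..n}. 0 \<le> P i j) \<and>
     (\<forall>i\<in>{1..n}. (\<Sum>j=1..n. P i j) = 1 / real n) \<and>
     (\<forall>j\<in>{1..n}. (\<Sum>i=1..n. P i j) = 1 / real n)"

definition Xi :: "nat \<Rightarrow> nat \<Rightarrow> real" where
  "Xi i j = (if i = j then 1 else if i > j then 2 else 0)"

text \<open>tau(M) = 1 - tr(Xi M Xi M^T), with the trace and all products written out.\<close>
definition kendall_tau :: "nat \<Rightarrow> (nat \<Rightarrow> nat \<Rightarrow> real) \<Rightarrow> real" where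
  "kendall_tau n M = 1 - (\<Sum>i=1..n. \<Sum>j=1..n. \<Sum>k=1..n. \<Sum>l=1..n.
       Xi i j * M j k * Xi k l * M i l)"

definition anti_comonotone :: "nat \<Rightarrow> nat \<Rightarrow> nat \<Rightarrow> real" where
  "anti_comonotone n i j = (if i + j = n + 1 then 1 / real n else 0)"

end

theory Submission
  imports Defs
begin

text \<open>Write \<open>Q\<close> for the anti-comonotone copula and \<open>D = P - Q\<close>. Since \<open>\<tau>\<close> is quadratic and the
  row and column sums of \<open>D\<close> vanish, the increment of \<open>\<tau>\<close> from \<open>x\<close> to \<open>y\<close> along the segment is
  \<open>2 (y - x)\<close> times the entrywise inner product of the midpoint copula \<open>M\<close> with \<open>\<Xi> D \<Xi>\<^sup>T\<close>.
  Each entry of \<open>\<Xi> D \<Xi>\<^sup>T\<close> is a sum of four corner sums of \<open>D\<close>, and these are nonnegative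
  because \<open>Q\<close> attains the Frechet-Hoeffding lower bound. As \<open>P \<noteq> Q\<close>, \<open>P\<close> has mass off the
  antidiagonal, which makes \<open>\<Xi> D \<Xi>\<^sup>T\<close> positive at some antidiagonal position, where \<open>M\<close> carries
  the positive mass \<open>1 - (x + y) / 2\<close> of \<open>Q\<close>.\<close>

definition kendall_form :: "nat \<Rightarrow> (nat \<Rightarrow> nat \<Rightarrow> real) \<Rightarrow> (nat \<Rightarrow> nat \<Rightarrow> real) \<Rightarrow> real" where
  "kendall_form n A B = (\<Sum>i=1..n. \<Sum>j=1..n. \<Sum>k=1..n. \<Sum>l=1..n. Xi i j * A j k * Xi k l * B i l)"

definition Xi_conj :: "nat \<Rightarrow> (nat \<Rightarrow> nat \<Rightarrow> real) \<Rightarrow> nat \<Rightarrow> nat \<Rightarrow> real" where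
  "Xi_conj n D j k = (\<Sum>i=1..n. \<Sum>l=1..n. Xi j i * Xi k l * D i l)"

definition corner_sum :: "(nat \<Rightarrow> nat \<Rightarrow> real) \<Rightarrow> nat \<Rightarrow> nat \<Rightarrow> real" where
  "corner_sum M a b = (\<Sum>i=1..a. \<Sum>l=1..b. M i l)"

definition tail_sum :: "nat \<Rightarrow> (nat \<Rightarrow> nat \<Rightarrow> real) \<Rightarrow> nat \<Rightarrow> nat \<Rightarrow> real" where
  "tail_sum n M a b = (\<Sum>i=a+1..n. \<Sum>l=b+1..n. M i l)"

lemma Xi_swap: "Xi j i = 2 - Xi i j"
  by (auto simp: Xi_def)

lemma sum_Xi_row:
  fixes f :: "nat \<Rightarrow> real"
  assumes "j \<le> n"
  shows "(\<Sum>i=1..n. Xi j i * f i) = (\<Sum>i=1..j. f i) + (\<Sum>i=1..j-1. f i)"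
proof -
  have initial: "{i\<in>{1..n}. i \<le> m} = {1..m}" if "m \<le> n" for m
    using that by auto
  have "(\<Sum>i=1..n. Xi j i * f i)
      = (\<Sum>i=1..n. (if i \<le> j then f i else 0) + (if i \<le> j - 1 then f i else 0))"
    by (intro sum.cong refl) (auto simp: Xi_def)
  also have "\<dots> = (\<Sum>i\<in>{i\<in>{1..n}. i \<le> j}. f i) + (\<Sum>i\<in>{i\<in>{1..n}. i \<le> j - 1}. f i)"
    by (simp only: sum.distrib sum.inter_filter finite_atLeastAtMost)
  also have "\<dots> = (\<Sum>i=1..j. f i) + (\<Sum>i=1..j-1. f i)"
    using assms by (simp only: initial diff_le_self le_trans)
  finally show ?thesis .
qed

lemma Xi_conj_eq_corner_sums:
  assumes "j \<le> n" "k \<le> n"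
  shows "Xi_conj n D j k
    = corner_sum D j k + corner_sum D j (k-1) + corner_sum D (j-1) k + corner_sum D (j-1) (k-1)"
proof -
  have "Xi_conj n D j k = (\<Sum>i=1..n. Xi j i * (\<Sum>l=1..n. Xi k l * D i l))"
    unfolding Xi_conj_def by (simp add: sum_distrib_left mult.assoc)
  also have "\<dots> = (\<Sum>i=1..n. Xi j i * ((\<Sum>l=1..k. D i l) + (\<Sum>l=1..k-1. D i l)))"
    using sum_Xi_row[OF assms(2)] by simp
  also have "\<dots> = (\<Sum>i=1..j. (\<Sum>l=1..k. D i l) + (\<Sum>l=1..k-1. D i l))
                   + (\<Sum>i=1..j-1. (\<Sum>l=1..k. D i l) + (\<Sum>l=1..k-1. D i l))"
    by (rule sum_Xi_row[OF assms(1)])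
  finally show ?thesis
    unfolding corner_sum_def by (simp add: sum.distrib)
qed

lemma kendall_tau_line_diff:
  fixes Q D :: "nat \<Rightarrow> nat \<Rightarrow> real" and x y :: real
  defines "M \<equiv> \<lambda>i j. Q i j + (x + y) / 2 * D i j"
  shows "kendall_tau n (\<lambda>i j. Q i j + y * D i j) - kendall_tau n (\<lambda>i j. Q i j + x * D i j)
    = -(y - x) * (kendall_form n M D + kendall_form n D M)"
proof -
  have "kendall_tau n (\<lambda>i j. Q i j + y * D i j) - kendall_tau n (\<lambda>i j. Q i j + x * D i j)
    = (\<Sum>i=1..n. \<Sum>j=1..n. \<Sum>k=1..n. \<Sum>l=1..n.
        Xi i j * (Q j k + x * D j k) * Xi k l * (Q i l + x * D i l)
      - Xi i j * (Q j k + y * D j k) * Xi k l * (Q i l + y * D i l))"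
    unfolding kendall_tau_def by (simp add: sum_subtractf)
  also have "\<dots> = (\<Sum>i=1..n. \<Sum>j=1..n. \<Sum>k=1..n. \<Sum>l=1..n.
        -(y - x) * (Xi i j * M j k * Xi k l * D i l + Xi i j * D j k * Xi k l * M i l))"
    unfolding M_def by (intro sum.cong refl) (simp add: field_simps)
  also have "\<dots> = -(y - x) * (kendall_form n M D + kendall_form n D M)"
    unfolding kendall_form_def by (simp add: distrib_left sum.distrib sum_distrib_left)
  finally show ?thesis .
qed

lemma kendall_form_polar_zero_margins:
  fixes M D :: "nat \<Rightarrow> nat \<Rightarrow> real"
  assumes rows: "\<And>i. i \<in> {1..n} \<Longrightarrow> (\<Sum>l=1..n. D i l) = 0"
    and cols: "\<And>l. l \<in> {1..n} \<Longrightarrow> (\<Sum>i=1..n. D i l) = 0"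
  shows "kendall_form n M D + kendall_form n D M
    = -2 * (\<Sum>j=1..n. \<Sum>k=1..n. M j k * Xi_conj n D j k)"
proof -
  have MD: "kendall_form n M D
      = (\<Sum>j=1..n. \<Sum>k=1..n. \<Sum>i=1..n. \<Sum>l=1..n. Xi i j * Xi k l * M j k * D i l)"
    unfolding kendall_form_def
    by (subst sum.swap, subst (2) sum.swap) (simp add: sum.swap[of _ "{1..n}" "{1..n}"] ac_simps)
  have DM: "kendall_form n D M
      = (\<Sum>j=1..n. \<Sum>k=1..n. \<Sum>i=1..n. \<Sum>l=1..n. Xi j i * Xi l k * M j k * D i l)"
    unfolding kendall_form_def
    by (subst (2) sum.swap, subst (3) sum.swap) (simp add: ac_simps)
  \<comment> \<open>The two linear terms only see the row and column sums of \<open>D\<close>.\<close>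
  have Xi_product: "Xi i j * Xi k l + Xi j i * Xi l k
      = 2 * Xi j i + 2 * Xi k l - 2 * (Xi j i * Xi k l)" for i j k l
    unfolding Xi_swap[of j i] Xi_swap[of k l] by (simp add: algebra_simps)
  have inner: "(\<Sum>i=1..n. \<Sum>l=1..n. (Xi i j * Xi k l + Xi j i * Xi l k) * M j k * D i l)
      = -2 * (M j k * Xi_conj n D j k)" for j k
  proof -
    have row_part: "(\<Sum>i=1..n. \<Sum>l=1..n. Xi j i * D i l) = 0"
      using rows by (simp add: sum_distrib_left[symmetric])
    have col_part: "(\<Sum>i=1..n. \<Sum>l=1..n. Xi k l * D i l) = 0"
      using cols by (subst sum.swap) (simp add: sum_distrib_left[symmetric])
    have "(\<Sum>i=1..n. \<Sum>l=1..n. (Xi i j * Xi k l + Xi j i * Xi l k) * M j k * D i l)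
        = (\<Sum>i=1..n. \<Sum>l=1..n. 2 * M j k * (Xi j i * D i l) + 2 * M j k * (Xi k l * D i l)
             - 2 * M j k * (Xi j i * Xi k l * D i l))"
      unfolding Xi_product by (simp add: algebra_simps)
    also have "\<dots> = 2 * M j k * (\<Sum>i=1..n. \<Sum>l=1..n. Xi j i * D i l)
        + 2 * M j k * (\<Sum>i=1..n. \<Sum>l=1..n. Xi k l * D i l) - 2 * M j k * Xi_conj n D j k"
      unfolding Xi_conj_def by (simp add: sum.distrib sum_subtractf sum_distrib_left)
    finally show ?thesis
      unfolding row_part col_part by simp
  qed
  have "kendall_form n M D + kendall_form n D M
      = (\<Sum>j=1..n. \<Sum>k=1..n. \<Sum>i=1..n. \<Sum>l=1..n. (Xi i j * Xi k l + Xi j i * Xi l k) * M j k * D i l)"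
    unfolding MD DM by (simp add: sum.distrib distrib_right)
  also have "\<dots> = -2 * (\<Sum>j=1..n. \<Sum>k=1..n. M j k * Xi_conj n D j k)"
    unfolding inner by (simp add: sum_distrib_left)
  finally show ?thesis .
qed

lemma checkerboard_copulaD:
  assumes "checkerboard_copula n M"
  shows checkerboard_copula_nonneg: "\<And>i j. i \<in> {1..n} \<Longrightarrow> j \<in> {1..n} \<Longrightarrow> 0 \<le> M i j"
    and checkerboard_copula_row_sum: "\<And>i. i \<in> {1..n} \<Longrightarrow> (\<Sum>j=1..n. M i j) = 1 / real n"
    and checkerboard_copula_col_sum: "\<And>j. j \<in> {1..n} \<Longrightarrow> (\<Sum>i=1..n. M i j) = 1 / real n"
  using assms unfolding checkerboard_copula_def by blast+

lemma checkerboard_copula_anti_comonotone: "checkerboard_copula n (anti_comonotone n)"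
proof -
  have antidiagonal_sum: "(\<Sum>j=1..n. if i + j = n + 1 then c else 0) = c"
    if "i \<in> {1..n}" for i and c :: real
  proof -
    have "(\<Sum>j=1..n. if i + j = n + 1 then c else 0) = (\<Sum>j=1..n. if j = n + 1 - i then c else 0)"
      by (rule sum.cong) (use that in auto)
    also have "\<dots> = c"
      using that by (subst sum.delta) auto
    finally show ?thesis .
  qed
  show ?thesis
    unfolding checkerboard_copula_def anti_comonotone_def
    using antidiagonal_sum by (simp add: add.commute)
qed

lemma kendall_tau_convex_diff:
  fixes x y :: real
  assumes P: "checkerboard_copula n P" and Q: "checkerboard_copula n Q"
  shows "kendall_tau n (\<lambda>i j. y * P i j + (1 - y) * Q i j)
      - kendall_tau n (\<lambda>i j. x * P i j + (1 - x) * Q i j)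
    = 2 * (y - x) * (\<Sum>j=1..n. \<Sum>k=1..n. ((x + y) / 2 * P j k + (1 - (x + y) / 2) * Q j k)
        * Xi_conj n (\<lambda>i l. P i l - Q i l) j k)"
proof -
  define D where "D = (\<lambda>i l. P i l - Q i l)"
  define M where "M = (\<lambda>i j. Q i j + (x + y) / 2 * D i j)"
  have "(\<Sum>l=1..n. D i l) = 0" "(\<Sum>l=1..n. D l i) = 0" if "i \<in> {1..n}" for i
    using that checkerboard_copulaD[OF P] checkerboard_copulaD[OF Q]
    by (simp_all add: D_def sum_subtractf)
  note D_margins = this
  have convex: "(\<lambda>i j. t * P i j + (1 - t) * Q i j) = (\<lambda>i j. Q i j + t * D i j)" for t
    unfolding D_def by (simp add: algebra_simps)
  have M_convex: "M = (\<lambda>j k. (x + y) / 2 * P j k + (1 - (x + y) / 2) * Q j k)"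
    unfolding M_def convex[symmetric] ..
  have "kendall_tau n (\<lambda>i j. Q i j + y * D i j) - kendall_tau n (\<lambda>i j. Q i j + x * D i j)
      = -(y - x) * (kendall_form n M D + kendall_form n D M)"
    unfolding M_def by (rule kendall_tau_line_diff)
  also have "\<dots> = 2 * (y - x) * (\<Sum>j=1..n. \<Sum>k=1..n. M j k * Xi_conj n D j k)"
    using kendall_form_polar_zero_margins[OF D_margins, of M] by (simp add: algebra_simps)
  finally show ?thesis
    unfolding convex by (simp only: M_convex D_def)
qed

lemma corner_sum_diff: "corner_sum (\<lambda>i j. P i j - Q i j) a b = corner_sum P a b - corner_sum Q a b"
  unfolding corner_sum_def by (simp add: sum_subtractf)

lemma sum_atLeastAtMost_split:
  fixes f :: "nat \<Rightarrow> real"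
  assumes "m \<le> n"
  shows "(\<Sum>x=1..n. f x) = (\<Sum>x=1..m. f x) + (\<Sum>x=m+1..n. f x)"
proof -
  have "{1..n} = {1..m} \<union> {m+1..n}"
    using assms by auto
  then show ?thesis
    by (simp add: sum.union_disjoint)
qed

lemma corner_sum_eq_tail_sum:
  assumes M: "checkerboard_copula n M" and "i \<le> n" "l \<le> n"
  shows "corner_sum M i l = (real i + real l - real n) / real n + tail_sum n M i l"
proof -
  define X where "X = (\<Sum>a=1..i. \<Sum>b=l+1..n. M a b)"
  have "real i / real n = (\<Sum>a=1..i. \<Sum>b=1..n. M a b)"
    using checkerboard_copula_row_sum[OF M] \<open>i \<le> n\<close> by simp
  also have "\<dots> = corner_sum M i l + X"
    unfolding corner_sum_def X_def using sum_atLeastAtMost_split[OF \<open>l \<le> n\<close>]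
    by (simp add: sum.distrib)
  finally have rows: "real i / real n = corner_sum M i l + X" .
  have "(real n - real l) / real n = (\<Sum>b=l+1..n. \<Sum>a=1..n. M a b)"
    using checkerboard_copula_col_sum[OF M] \<open>l \<le> n\<close> by simp
  also have "\<dots> = (\<Sum>a=1..n. \<Sum>b=l+1..n. M a b)"
    by (rule sum.swap)
  also have "\<dots> = X + tail_sum n M i l"
    unfolding tail_sum_def X_def using sum_atLeastAtMost_split[OF \<open>i \<le> n\<close>] by blast
  finally have cols: "(real n - real l) / real n = X + tail_sum n M i l" .
  show ?thesis
    using rows cols by (simp add: diff_divide_distrib add_divide_distrib)
qed

lemma corner_sum_anti_comonotone_eq_0:
  "i + l \<le> n \<Longrightarrow> corner_sum (anti_comonotone n) i l = 0"
  unfolding corner_sum_def by (intro sum.neutral ballI) (auto simp: anti_comonotone_def)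

lemma tail_sum_anti_comonotone_eq_0:
  "n \<le> i + l \<Longrightarrow> tail_sum n (anti_comonotone n) i l = 0"
  unfolding tail_sum_def by (intro sum.neutral ballI) (auto simp: anti_comonotone_def)

lemma corner_sum_anti_comonotone_le:
  assumes M: "checkerboard_copula n M" and "i \<le> n" "l \<le> n"
  shows "corner_sum (anti_comonotone n) i l \<le> corner_sum M i l"
proof (cases "i + l \<le> n")
  case True
  have "corner_sum (anti_comonotone n) i l = 0"
    using True by (rule corner_sum_anti_comonotone_eq_0)
  moreover have "0 \<le> corner_sum M i l"
    unfolding corner_sum_def using checkerboard_copula_nonneg[OF M] assms by (intro sum_nonneg) auto
  ultimately show ?thesis
    by simp
next
  case False
  have "tail_sum n (anti_comonotone n) i l = 0"
    using False by (intro tail_sum_anti_comonotone_eq_0) simp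
  moreover have "0 \<le> tail_sum n M i l"
    unfolding tail_sum_def using checkerboard_copula_nonneg[OF M] by (intro sum_nonneg) auto
  ultimately show ?thesis
    using corner_sum_eq_tail_sum[OF M] corner_sum_eq_tail_sum[OF checkerboard_copula_anti_comonotone]
      assms by simp
qed

lemma Xi_conj_diff_anti_comonotone_nonneg:
  assumes "checkerboard_copula n P" "j \<le> n" "k \<le> n"
  shows "0 \<le> Xi_conj n (\<lambda>i l. P i l - anti_comonotone n i l) j k"
  using assms corner_sum_anti_comonotone_le[OF assms(1)]
  by (simp add: Xi_conj_eq_corner_sums corner_sum_diff)

lemma checkerboard_copula_pos_off_antidiagonal:
  assumes P: "checkerboard_copula n P"
    and "\<exists>i\<in>{1..n}. \<exists>j\<in>{1..n}. P i j \<noteq> anti_comonotone n i j"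
  shows "\<exists>a\<in>{1..n}. \<exists>b\<in>{1..n}. a + b \<noteq> n + 1 \<and> 0 < P a b"
proof (rule ccontr)
  assume none: "\<not> ?thesis"
  have off: "P a b = 0" if "a \<in> {1..n}" "b \<in> {1..n}" "a + b \<noteq> n + 1" for a b
    using none that checkerboard_copula_nonneg[OF P, of a b] by force
  obtain a b where ab: "a \<in> {1..n}" "b \<in> {1..n}" "P a b \<noteq> anti_comonotone n a b"
    using assms(2) by blast
  then have antidiagonal: "a + b = n + 1"
    using off[of a b] unfolding anti_comonotone_def by (auto split: if_splits)
  have "1 / real n = (\<Sum>c=1..n. P a c)"
    using checkerboard_copula_row_sum[OF P ab(1)] by simp
  also have "\<dots> = (\<Sum>c=1..n. if c = b then P a b else 0)"
    using ab(1) antidiagonal off by (intro sum.cong refl) auto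
  also have "\<dots> = P a b"
    using ab(2) by simp
  finally show False
    using ab antidiagonal by (simp add: anti_comonotone_def)
qed

lemma corner_sum_ge_entry:
  assumes "\<forall>x\<in>{1..i}. \<forall>y\<in>{1..l}. 0 \<le> M x y" "a \<in> {1..i}" "b \<in> {1..l}"
  shows "M a b \<le> corner_sum M i l"
proof -
  have "M a b \<le> (\<Sum>(x, y)\<in>{1..i} \<times> {1..l}. M x y)"
    using assms by (intro member_le_sum[where f = "\<lambda>(x, y). M x y", of "(a, b)", simplified]) auto
  then show ?thesis
    unfolding corner_sum_def by (simp add: sum.cartesian_product)
qed

lemma tail_sum_ge_entry:
  assumes "\<forall>x\<in>{i+1..n}. \<forall>y\<in>{l+1..n}. 0 \<le> M x y" "a \<in> {i+1..n}" "b \<in> {l+1..n}"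
  shows "M a b \<le> tail_sum n M i l"
proof -
  have "M a b \<le> (\<Sum>(x, y)\<in>{i+1..n} \<times> {l+1..n}. M x y)"
    using assms by (intro member_le_sum[where f = "\<lambda>(x, y). M x y", of "(a, b)", simplified]) auto
  then show ?thesis
    unfolding tail_sum_def by (simp add: sum.cartesian_product)
qed

lemma exists_corner_sum_diff_anti_comonotone_pos:
  assumes P: "checkerboard_copula n P"
    and "\<exists>i\<in>{1..n}. \<exists>j\<in>{1..n}. P i j \<noteq> anti_comonotone n i j"
  shows "\<exists>j\<in>{1..n}. 0 < corner_sum (\<lambda>i l. P i l - anti_comonotone n i l) j (n - j)"
proof -
  obtain a b where ab: "a \<in> {1..n}" "b \<in> {1..n}" "a + b \<noteq> n + 1" "0 < P a b"
    using checkerboard_copula_pos_off_antidiagonal[OF assms] by blast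
  have nonneg: "\<forall>x\<in>{1..n}. \<forall>y\<in>{1..n}. 0 \<le> P x y"
    using checkerboard_copula_nonneg[OF P] by blast
  have "\<exists>j\<in>{1..n}. P a b \<le> corner_sum P j (n - j)"
  proof (cases "a + b \<le> n")
    case True
    then have "P a b \<le> corner_sum P a (n - a)"
      using ab nonneg by (intro corner_sum_ge_entry) auto
    then show ?thesis
      using ab(1) by blast
  next
    case False
    \<comment> \<open>A corner ending on the antidiagonal has the same mass as the opposite block.\<close>
    then have "P a b \<le> tail_sum n P (a - 1) (n - (a - 1))"
      using ab nonneg by (intro tail_sum_ge_entry) auto
    also have "\<dots> = corner_sum P (a - 1) (n - (a - 1))"
      using corner_sum_eq_tail_sum[OF P, of "a - 1" "n - (a - 1)"] ab(1) by auto
    finally show ?thesis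
      using ab False by (intro bexI[of _ "a - 1"]) auto
  qed
  then obtain j where j: "j \<in> {1..n}" "P a b \<le> corner_sum P j (n - j)"
    by blast
  moreover have "corner_sum (anti_comonotone n) j (n - j) = 0"
    using j by (intro corner_sum_anti_comonotone_eq_0) auto
  ultimately show ?thesis
    using ab(4) by (intro bexI[of _ j]) (auto simp: corner_sum_diff)
qed

lemma exists_Xi_conj_diff_anti_comonotone_pos:
  assumes P: "checkerboard_copula n P"
    and "\<exists>i\<in>{1..n}. \<exists>j\<in>{1..n}. P i j \<noteq> anti_comonotone n i j"
  shows "\<exists>j\<in>{1..n}. 0 < Xi_conj n (\<lambda>i l. P i l - anti_comonotone n i l) j (n + 1 - j)"
proof -
  define D where "D = (\<lambda>i l. P i l - anti_comonotone n i l)"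
  obtain j where j: "j \<in> {1..n}" and pos: "0 < corner_sum D j (n - j)"
    using exists_corner_sum_diff_anti_comonotone_pos[OF assms] unfolding D_def by blast
  have nonneg: "0 \<le> corner_sum D i l" if "i \<le> n" "l \<le> n" for i l
    using corner_sum_anti_comonotone_le[OF P that] unfolding D_def corner_sum_diff by simp
  have "Xi_conj n D j (n + 1 - j) = corner_sum D j (n + 1 - j) + corner_sum D j (n - j)
      + corner_sum D (j - 1) (n + 1 - j) + corner_sum D (j - 1) (n - j)"
    using j Xi_conj_eq_corner_sums[of j n "n + 1 - j" D] by auto
  moreover have "0 \<le> corner_sum D j (n + 1 - j)" "0 \<le> corner_sum D (j - 1) (n + 1 - j)"
    "0 \<le> corner_sum D (j - 1) (n - j)"
    using j by (auto intro: nonneg)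
  ultimately have "0 < Xi_conj n D j (n + 1 - j)"
    using pos by linarith
  then show ?thesis
    using j unfolding D_def by blast
qed

lemma weighted_Xi_conj_diff_anti_comonotone_pos:
  fixes s :: real
  assumes P: "checkerboard_copula n P"
    and "\<exists>i\<in>{1..n}. \<exists>j\<in>{1..n}. P i j \<noteq> anti_comonotone n i j"
    and "0 \<le> s" "s < 1"
  shows "0 < (\<Sum>j=1..n. \<Sum>k=1..n. (s * P j k + (1 - s) * anti_comonotone n j k)
      * Xi_conj n (\<lambda>i l. P i l - anti_comonotone n i l) j k)"
proof -
  define Q where "Q = anti_comonotone n"
  define E where "E = Xi_conj n (\<lambda>i l. P i l - Q i l)"
  define M where "M = (\<lambda>j k. s * P j k + (1 - s) * Q j k)"
  obtain j where j: "j \<in> {1..n}" and E_pos: "0 < E j (n + 1 - j)"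
    using exists_Xi_conj_diff_anti_comonotone_pos[OF assms(1,2)] unfolding E_def Q_def by blast
  have k: "n + 1 - j \<in> {1..n}"
    using j by auto
  have terms_nonneg: "0 \<le> M i l * E i l" if "i \<in> {1..n}" "l \<in> {1..n}" for i l
    using assms(3,4) that checkerboard_copula_nonneg[OF P that]
      Xi_conj_diff_anti_comonotone_nonneg[OF P]
    unfolding M_def E_def Q_def by (simp add: anti_comonotone_def)
  have "0 < M j (n + 1 - j)"
    using assms(3,4) j checkerboard_copula_nonneg[OF P j k]
    unfolding M_def Q_def by (auto simp: anti_comonotone_def intro!: add_nonneg_pos)
  then have row_pos: "0 < (\<Sum>l=1..n. M j l * E j l)"
    using k E_pos terms_nonneg j by (intro sum_pos2[where i = "n + 1 - j"]) auto
  have "0 < (\<Sum>i=1..n. \<Sum>l=1..n. M i l * E i l)"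
    by (rule sum_pos2[where i = j]) (use j row_pos terms_nonneg in \<open>auto intro: sum_nonneg\<close>)
  then show ?thesis
    unfolding M_def E_def Q_def .
qed

theorem lemma10:
  fixes n :: nat and P :: "nat \<Rightarrow> nat \<Rightarrow> real"
  assumes "n \<ge> 2"
    and "checkerboard_copula n P"
    and "\<exists>i\<in>{1..n}. \<exists>j\<in>{1..n}. P i j \<noteq> anti_comonotone n i j"
  shows "strict_mono_on {0..1::real}
           (\<lambda>\<alpha>. kendall_tau n (\<lambda>i j. \<alpha> * P i j + (1 - \<alpha>) * anti_comonotone n i j))"
proof (rule strict_mono_onI)
  fix x y :: real
  assume "x \<in> {0..1}" "y \<in> {0..1}" "x < y"
  let ?S = "\<Sum>j=1..n. \<Sum>k=1..n. ((x + y) / 2 * P j k + (1 - (x + y) / 2) * anti_comonotone n j k)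
      * Xi_conj n (\<lambda>i l. P i l - anti_comonotone n i l) j k"
  have "0 < ?S"
    using \<open>x \<in> {0..1}\<close> \<open>y \<in> {0..1}\<close> \<open>x < y\<close>
    by (intro weighted_Xi_conj_diff_anti_comonotone_pos[OF assms(2,3)]) auto
  then have "0 < 2 * (y - x) * ?S"
    using \<open>x < y\<close> by simp
  then show "kendall_tau n (\<lambda>i j. x * P i j + (1 - x) * anti_comonotone n i j)
      < kendall_tau n (\<lambda>i j. y * P i j + (1 - y) * anti_comonotone n i j)"
    using kendall_tau_convex_diff[OF assms(2) checkerboard_copula_anti_comonotone, of y x] by linarith
qed

end
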